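(* Suppose $L=cW$ with $c\in\mathbb{C}\setminus\{0\}$ and $W\in\mathbb{C}^{p\times p}$ unitary. Let $\mathcal A\in\mathbb{C}_p^{I_1\times\cdots\times I_N}$. For each $n$ let $\mathcal A_{(n)}=\mathcal U_n*\Sigma_n*\mathcal V_n^H$ be the t-SVD of the mode-$n$ unfolding, let $R_n$ be the t-rank of $\mathcal A_{(n)}$, let $\sigma^{(n)}_i=\|\Sigma_n(i,i)\|$ (Frobenius norm of the $i$-th diagonal tubal scalar), and fix integers $1\le I_n'\le I_n$. Let $\overline{\mathcal U}_n\in\mathbb{C}_p^{I_n\times I_n'}$ consist of the first $I_n'$ columns of $\mathcal U_n$, and define the truncated Hot-SVD approximation $$\widehat{\mathcal A}=\widetilde{\mathcal S}*_1\overline{\mathcal U}_1\cdots*_N\overline{\mathcal U}_N,\qquad \widetilde{\mathcal S}=\mathcal A*_1\overline{\mathcal U}_1^H\cdots*_N\overline{\mathcal U}_N^H\in\mathbb{C}_p^{I_1'\times\cdots\times I_N'}.$$ Then $$\|\mathcal A-\widehat{\mathcal A}\|\le\sqrt{\sum_{n=1}^N\sum_{i=I_n'+1}^{R_n}(\sigma^{(n)}_i)^2}\le\sqrt N\,\big\|\mathcal A-\mathcal S*_1\mathcal W_1\cdots*_N\mathcal W_N\big\|$$ for every $\mathcal S\in\mathbb{C}_p^{I_1'\times\cdots\times I_N'}$ and all $\mathcal W_n\in\mathbb{C}_p^{I_n\times I_n'}$ with $\mathcal W_n^H*\mathcal W_n=\mathcal I_{I_n'}$ (empty sums are $0$). In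 particular the bound holds with $\sqrt N\|\mathcal A-\mathcal A^*\|$, where $\mathcal A^*$ is an optimal solution of this orthogonal low-tubal-rank approximation problem.
   Context: Fix an integer $p\ge1$ and an invertible linear map $L:\mathbb{C}^p\to\mathbb{C}^p$. A tubal scalar is an element of $\mathbb{C}_p:=\mathbb{C}^p$. The tensor-tensor product of tubal scalars is $\mathbf a*\mathbf b=L^{-1}(L(\mathbf a)\odot L(\mathbf b))$, where $\odot$ is the componentwise product. A tubal matrix $\mathcal A\in\mathbb{C}_p^{I\times J}$ is an $I\times J$ array of tubal scalars; its $k$-th frontal slice $\mathcal A^{(k)}$ has entries $\mathcal A(i,j)^{(k)}$, and $L(\mathcal A)$ is obtained by applying $L$ to every entry. $(\mathcal A*\mathcal B)(i,k)=\sum_j\mathcal A(i,j)*\mathcal B(j,k)$; equivalently $L(\mathcal A*\mathcal B)^{(k)}=L(\mathcal A)^{(k)}L(\mathcal B)^{(k)}$. The identity $\mathcal I_I$ has $L(\mathcal I_I)^{(k)}$ equal to the $I\times I$ identity matrix for all $k$. The Hermitian transpose is defined by $L(\mathcal A^H)^{(k)}=(L(\mathcal A)^{(k)})^H$; $\mathcal A\in\mathbb{C}_p^{I\times I}$ is unitary if $\mathcal A*\mathcal A^H=\mathcal A^H*\mathcal A=\mathcal I_I$. A t-SVD of $\mathcal A\in\mathbb{C}_p^{I\times J}$ is the factorization $\mathcal A=\mathcal U*\Sigma*\mathcal V^H$ obtained by taking, for each $k$, a matrix SVD $L(\mathcal A)^{(k)}=U_kS_kV_k^H$ (with $U_k,V_k$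 unitary, $S_k$ rectangular diagonal with singular values in nonincreasing order) and defining $L(\mathcal U)^{(k)}=U_k$, $L(\Sigma)^{(k)}=S_k$, $L(\mathcal V)^{(k)}=V_k$. The t-rank is the number of nonzero tubal scalars $\Sigma(i,i)$. A tubal tensor $\mathcal A\in\mathbb{C}_p^{I_1\times\cdots\times I_N}$ is an $N$-way array of tubal scalars; its mode-$n$ unfolding $\mathcal A_{(n)}\in\mathbb{C}_p^{I_n\times\prod_{m\neq n}I_m}$ has $\mathcal A_{(n)}(i_n,j)=\mathcal A(i_1,\dots,i_N)$ with $j=1+\sum_{k\neq n}(i_k-1)\prod_{m<k,\,m\neq n}I_m$. The $n$-mode product is $(\mathcal A*_n\mathcal U)(i_1,\dots,i_{n-1},j,i_{n+1},\dots,i_N)=\sum_{i_n}\mathcal A(i_1,\dots,i_N)*\mathcal U(j,i_n)$; repeated products are evaluated left to right. $\|\cdot\|$ is the Frobenius norm (Euclidean norm of all complex entries of the underlying array). *)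

theory Defs
  imports Complex_Main
begin

text \<open>Representation conventions (all indices are 0-based).
  A tubal scalar is a function nat => complex; only components k < p matter.
  The invertible linear map L and its inverse are given by p x p matrices
  (functions nat => nat => complex, only entries i,j < p matter).
  A tubal matrix is a function nat => nat => tube (row, column);
  its dimensions are carried explicitly wherever they matter.
  A tubal tensor of dimensions Is (a list of length N) is a function
  nat list => tube, indexed by lists xs with length xs = N and xs!m < Is!m.\<close>

type_synonym tube = "nat \<Rightarrow> complex"
type_synonym tmat = "nat \<Rightarrow> nat \<Rightarrow> tube"
type_synonym tten = "nat list \<Rightarrow> tube"

definition Ltube :: "nat \<Rightarrow> (nat \<Rightarrow> nat \<Rightarrow> complex) \<Rightarrow> tube \<Rightarrow> tube" where
  "Ltube p M a = (\<lambda>k. \<Sum>j<p. M k j * a j)"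

definition tmult :: "nat \<Rightarrow> (nat \<Rightarrow> nat \<Rightarrow> complex) \<Rightarrow> (nat \<Rightarrow> nat \<Rightarrow> complex)
    \<Rightarrow> tube \<Rightarrow> tube \<Rightarrow> tube" where
  "tmult p Lm Lmi a b = Ltube p Lmi (\<lambda>k. Ltube p Lm a k * Ltube p Lm b k)"

definition tmprod :: "nat \<Rightarrow> (nat \<Rightarrow> nat \<Rightarrow> complex) \<Rightarrow> (nat \<Rightarrow> nat \<Rightarrow> complex)
    \<Rightarrow> nat \<Rightarrow> tmat \<Rightarrow> tmat \<Rightarrow> tmat" where
  "tmprod p Lm Lmi J A B = (\<lambda>i k t. \<Sum>j<J. tmult p Lm Lmi (A i j) (B j k) t)"

text \<open>Hermitian transpose: L(A^H)^(k) = (L(A)^(k))^H.\<close>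
definition tmH :: "nat \<Rightarrow> (nat \<Rightarrow> nat \<Rightarrow> complex) \<Rightarrow> (nat \<Rightarrow> nat \<Rightarrow> complex)
    \<Rightarrow> tmat \<Rightarrow> tmat" where
  "tmH p Lm Lmi A = (\<lambda>i j. Ltube p Lmi (\<lambda>k. cnj (Ltube p Lm (A j i) k)))"

text \<open>Identity tubal matrix: every frontal slice of L(I) is the identity.\<close>
definition tmId :: "nat \<Rightarrow> (nat \<Rightarrow> nat \<Rightarrow> complex) \<Rightarrow> tmat" where
  "tmId p Lmi = (\<lambda>i j. if i = j then Ltube p Lmi (\<lambda>_. 1) else (\<lambda>_. 0))"

definition tmeq :: "nat \<Rightarrow> nat \<Rightarrow> nat \<Rightarrow> tmat \<Rightarrow> tmat \<Rightarrow> bool" where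
  "tmeq p I J A B \<longleftrightarrow> (\<forall>i<I. \<forall>j<J. \<forall>k<p. A i j k = B i j k)"

definition Lslice :: "nat \<Rightarrow> (nat \<Rightarrow> nat \<Rightarrow> complex) \<Rightarrow> tmat \<Rightarrow> nat \<Rightarrow> (nat \<Rightarrow> nat \<Rightarrow> complex)" where
  "Lslice p Lm A k = (\<lambda>i j. Ltube p Lm (A i j) k)"

definition cunitary :: "nat \<Rightarrow> (nat \<Rightarrow> nat \<Rightarrow> complex) \<Rightarrow> bool" where
  "cunitary n M \<longleftrightarrow>
     (\<forall>i<n. \<forall>j<n. (\<Sum>l<n. M i l * cnj (M j l)) = (if i = j then 1 else 0)) \<and>
     (\<forall>i<n. \<forall>j<n. (\<Sum>l<n. cnj (M l i) * M l j) = (if i = j then 1 else 0))"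

definition is_svd :: "nat \<Rightarrow> nat \<Rightarrow> (nat \<Rightarrow> nat \<Rightarrow> complex) \<Rightarrow> (nat \<Rightarrow> nat \<Rightarrow> complex)
    \<Rightarrow> (nat \<Rightarrow> nat \<Rightarrow> complex) \<Rightarrow> (nat \<Rightarrow> nat \<Rightarrow> complex) \<Rightarrow> bool" where
  "is_svd I J A U S V \<longleftrightarrow>
     cunitary I U \<and> cunitary J V \<and>
     (\<forall>i<I. \<forall>j<J. i \<noteq> j \<longrightarrow> S i j = 0) \<and>
     (\<forall>i<min I J. S i i \<in> \<real> \<and> Re (S i i) \<ge> 0) \<and>
     (\<forall>i j. i \<le> j \<longrightarrow> j < min I J \<longrightarrow> Re (S j j) \<le> Re (S i i)) \<and>
     (\<forall>i<I. \<forall>j<J. A i j = (\<Sum>l<I. \<Sum>m<J. U i l * S l m * cnj (V j m)))"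

definition is_tsvd :: "nat \<Rightarrow> (nat \<Rightarrow> nat \<Rightarrow> complex) \<Rightarrow> nat \<Rightarrow> nat
    \<Rightarrow> tmat \<Rightarrow> tmat \<Rightarrow> tmat \<Rightarrow> tmat \<Rightarrow> bool" where
  "is_tsvd p Lm I J A U S V \<longleftrightarrow>
     (\<forall>k<p. is_svd I J (Lslice p Lm A k) (Lslice p Lm U k) (Lslice p Lm S k) (Lslice p Lm V k))"

definition tube_norm :: "nat \<Rightarrow> tube \<Rightarrow> real" where
  "tube_norm p a = sqrt (\<Sum>k<p. (cmod (a k))\<^sup>2)"

definition trank :: "nat \<Rightarrow> nat \<Rightarrow> nat \<Rightarrow> tmat \<Rightarrow> nat" where
  "trank p I J S = card {i. i < min I J \<and> (\<exists>k<p. S i i k \<noteq> 0)}"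

definition tidx :: "nat list \<Rightarrow> nat list set" where
  "tidx Is = {xs. length xs = length Is \<and> (\<forall>m<length Is. xs ! m < Is ! m)}"

definition tnorm :: "nat \<Rightarrow> nat list \<Rightarrow> tten \<Rightarrow> real" where
  "tnorm p Is A = sqrt (\<Sum>xs\<in>tidx Is. \<Sum>k<p. (cmod (A xs k))\<^sup>2)"

definition ncols :: "nat list \<Rightarrow> nat \<Rightarrow> nat" where
  "ncols Is n = (\<Prod>m\<in>{0..<length Is} - {n}. Is ! m)"

text \<open>Mode-n unfolding (0-based): column index j = sum_{k<>n} i_k prod_{m<k, m<>n} I_m,
  decoded by i_k = (j div prod_{m<k, m<>n} I_m) mod I_k.\<close>
definition unfold :: "nat list \<Rightarrow> nat \<Rightarrow> tten \<Rightarrow> tmat" where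
  "unfold Is n A = (\<lambda>i j. A (map (\<lambda>m. if m = n then i
        else (j div (\<Prod>l\<in>{0..<m} - {n}. Is ! l)) mod (Is ! m)) [0..<length Is]))"

definition nmode :: "nat \<Rightarrow> (nat \<Rightarrow> nat \<Rightarrow> complex) \<Rightarrow> (nat \<Rightarrow> nat \<Rightarrow> complex)
    \<Rightarrow> nat \<Rightarrow> nat \<Rightarrow> tten \<Rightarrow> tmat \<Rightarrow> tten" where
  "nmode p Lm Lmi K n A U = (\<lambda>xs t. \<Sum>i<K. tmult p Lm Lmi (A (xs[n := i])) (U (xs ! n) i) t)"

text \<open>A *_1 U_1 ... *_N U_N (left to right), where Ks!n is the mode-n dimension
  of A (unchanged by the products in the other modes) and N = length Ks.\<close>
definition mmprod :: "nat \<Rightarrow> (nat \<Rightarrow> nat \<Rightarrow> complex) \<Rightarrow> (nat \<Rightarrow> nat \<Rightarrow> complex)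
    \<Rightarrow> nat list \<Rightarrow> tten \<Rightarrow> (nat \<Rightarrow> tmat) \<Rightarrow> tten" where
  "mmprod p Lm Lmi Ks A Us = foldl (\<lambda>B n. nmode p Lm Lmi (Ks ! n) n B (Us n)) A [0..<length Ks]"

definition tcols :: "nat \<Rightarrow> tmat \<Rightarrow> tmat" where
  "tcols K U = (\<lambda>i j. if j < K then U i j else (\<lambda>_. 0))"

end

theory Submission
  imports Defs
begin

text \<open>Since \<open>L = c W\<close> with \<open>W\<close> unitary, \<open>|c|\<^sup>2 \<parallel>X\<parallel>\<^sup>2\<close> is the sum of the squared Frobenius norms
  of the frontal slices of \<open>L(X)\<close>, and all products act slicewise there, so everything reduces
  to complex tensors. In one slice, mode \<open>n\<close> of the truncated Hot-SVD is the orthogonal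
  projection \<open>P\<close> onto the leading \<open>I\<^sub>n'\<close> left singular vectors of the mode-\<open>n\<close> unfolding.
  Because \<open>\<parallel>a - P b\<parallel>\<^sup>2 \<le> \<parallel>a - P a\<parallel>\<^sup>2 + \<parallel>a - b\<parallel>\<^sup>2\<close>, applying the \<open>N\<close> projections in turn
  costs at most the sum of the \<open>N\<close> truncation errors, which are the singular value tails.
  Conversely, by the Eckart-Young argument (Bessel's inequality plus a rearrangement
  inequality) each tail is at most the error of any approximation whose mode-\<open>n\<close> factor has
  \<open>I\<^sub>n'\<close> orthonormal columns; summing over the modes gives the factor \<open>\<surd>N\<close>. Finally, the
  singular values of every slice are sorted, so the nonzero diagonal tubes of \<open>\<Sigma>\<^sub>n\<close> come first
  and \<open>|c|\<^sup>2\<close> times a tubal tail is the sum of the corresponding slice tails.\<close>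

section \<open>Complex vectors and matrices with orthonormal columns\<close>

definition cinner :: "nat \<Rightarrow> (nat \<Rightarrow> complex) \<Rightarrow> (nat \<Rightarrow> complex) \<Rightarrow> complex" where
  "cinner n x y = (\<Sum>i<n. x i * cnj (y i))"

definition sqnorm :: "nat \<Rightarrow> (nat \<Rightarrow> complex) \<Rightarrow> real" where
  "sqnorm n x = (\<Sum>i<n. (cmod (x i))\<^sup>2)"

text \<open>The first argument is the range of summation: the number of columns of \<open>W\<close>
  for \<open>W y\<close>, the number of rows of \<open>W\<close> for \<open>W\<^sup>H u\<close>.\<close>

definition mat_vec :: "nat \<Rightarrow> (nat \<Rightarrow> nat \<Rightarrow> complex) \<Rightarrow> (nat \<Rightarrow> complex) \<Rightarrow> nat \<Rightarrow> complex" where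
  "mat_vec r W y = (\<lambda>i. \<Sum>l<r. W i l * y l)"

definition adj_vec :: "nat \<Rightarrow> (nat \<Rightarrow> nat \<Rightarrow> complex) \<Rightarrow> (nat \<Rightarrow> complex) \<Rightarrow> nat \<Rightarrow> complex" where
  "adj_vec I W u = (\<lambda>l. \<Sum>i<I. cnj (W i l) * u i)"

definition orthonormal_cols :: "nat \<Rightarrow> nat \<Rightarrow> (nat \<Rightarrow> nat \<Rightarrow> complex) \<Rightarrow> bool" where
  "orthonormal_cols I r W \<longleftrightarrow>
     (\<forall>l<r. \<forall>l'<r. (\<Sum>i<I. cnj (W i l) * W i l') = (if l = l' then 1 else 0))"

lemma sum_lessThan_if_less: "(\<Sum>l<(I::nat). if l < r then f l else 0) = (\<Sum>l<min I r. f l)"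
proof -
  have "{l \<in> {..<I}. l < r} = {..<min I r}" by auto
  then show ?thesis by (metis (no_types) finite_lessThan sum.inter_filter)
qed

lemma sum_lessThan_if_not_less: "(\<Sum>l<(I::nat). if l < r then 0 else f l) = (\<Sum>l\<in>{r..<I}. f l)"
proof -
  have "{l \<in> {..<I}. \<not> l < r} = {r..<I}" by auto
  moreover have "(\<Sum>l<I. if l < r then 0 else f l) = (\<Sum>l<I. if \<not> l < r then f l else 0)"
    by (intro sum.cong) auto
  ultimately show ?thesis by (metis (no_types) finite_lessThan sum.inter_filter)
qed

lemma sqnorm_eq_cinner: "complex_of_real (sqnorm n x) = cinner n x x"
  unfolding sqnorm_def cinner_def by (simp only: of_real_sum complex_norm_square)

lemma sqnorm_nonneg: "0 \<le> sqnorm n x"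
  unfolding sqnorm_def by (simp add: sum_nonneg)

lemma cinner_commute: "cinner n y x = cnj (cinner n x y)"
  unfolding cinner_def by (simp add: cnj_sum mult.commute)

lemma cinner_cong:
  "(\<And>i. i < n \<Longrightarrow> x i = x' i) \<Longrightarrow> (\<And>i. i < n \<Longrightarrow> y i = y' i) \<Longrightarrow> cinner n x y = cinner n x' y'"
  unfolding cinner_def by (intro sum.cong) auto

lemma sqnorm_cong: "(\<And>i. i < n \<Longrightarrow> x i = x' i) \<Longrightarrow> sqnorm n x = sqnorm n x'"
  unfolding sqnorm_def by (intro sum.cong) auto

lemma sqnorm_add: "sqnorm n (\<lambda>i. x i + y i) = sqnorm n x + sqnorm n y + 2 * Re (cinner n x y)"
proof -
  have "(cmod (a + b))\<^sup>2 = (cmod a)\<^sup>2 + (cmod b)\<^sup>2 + 2 * Re (a * cnj b)" for a b :: complex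
    unfolding cmod_power2 by (simp add: power2_eq_square algebra_simps)
  then show ?thesis unfolding sqnorm_def cinner_def by (simp add: sum.distrib sum_distrib_left)
qed

lemma sqnorm_diff: "sqnorm n (\<lambda>i. x i - y i) = sqnorm n x + sqnorm n y - 2 * Re (cinner n x y)"
  using sqnorm_add[of n x "\<lambda>i. - y i"] by (simp add: sqnorm_def cinner_def sum_negf)

lemma cinner_mat_vec: "cinner I (mat_vec r W y) u = cinner r y (adj_vec I W u)"
proof -
  have "cinner I (mat_vec r W y) u = (\<Sum>i<I. \<Sum>l<r. W i l * y l * cnj (u i))"
    unfolding cinner_def mat_vec_def by (simp add: sum_distrib_right)
  also have "\<dots> = (\<Sum>l<r. \<Sum>i<I. W i l * y l * cnj (u i))" by (rule sum.swap)
  also have "\<dots> = cinner r y (adj_vec I W u)"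
    unfolding cinner_def adj_vec_def by (simp add: cnj_sum sum_distrib_left algebra_simps)
  finally show ?thesis .
qed

lemma mat_vec_diff: "mat_vec r W (\<lambda>l. a l - b l) i = mat_vec r W a i - mat_vec r W b i"
  unfolding mat_vec_def by (simp add: sum_subtractf right_diff_distrib)

lemma adj_vec_diff: "adj_vec I W (\<lambda>i. a i - b i) l = adj_vec I W a l - adj_vec I W b l"
  unfolding adj_vec_def by (simp add: sum_subtractf right_diff_distrib)

lemma adj_vec_mat_vec:
  assumes "orthonormal_cols I r W" "l < r"
  shows "adj_vec I W (mat_vec r W y) l = y l"
proof -
  have "adj_vec I W (mat_vec r W y) l = (\<Sum>i<I. \<Sum>l'<r. cnj (W i l) * W i l' * y l')"
    unfolding adj_vec_def mat_vec_def by (simp add: sum_distrib_left algebra_simps)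
  also have "\<dots> = (\<Sum>l'<r. (\<Sum>i<I. cnj (W i l) * W i l') * y l')"
    by (subst sum.swap) (simp add: sum_distrib_right)
  also have "\<dots> = (\<Sum>l'<r. if l = l' then y l' else 0)"
    using assms unfolding orthonormal_cols_def by (intro sum.cong) auto
  finally show ?thesis using assms(2) by simp
qed

lemma mat_vec_adj_vec_unitary:
  assumes "cunitary I U" "i < I"
  shows "mat_vec I U (adj_vec I U u) i = u i"
proof -
  have "mat_vec I U (adj_vec I U u) i = (\<Sum>l<I. \<Sum>i'<I. U i l * cnj (U i' l) * u i')"
    unfolding mat_vec_def adj_vec_def by (simp add: sum_distrib_left algebra_simps)
  also have "\<dots> = (\<Sum>i'<I. (\<Sum>l<I. U i l * cnj (U i' l)) * u i')"
    by (subst sum.swap) (simp add: sum_distrib_right)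
  also have "\<dots> = (\<Sum>i'<I. if i = i' then u i' else 0)"
    using assms unfolding cunitary_def by (intro sum.cong) auto
  finally show ?thesis using assms(2) by simp
qed

lemma cunitary_imp_orthonormal_cols: "cunitary I U \<Longrightarrow> orthonormal_cols I I U"
  unfolding cunitary_def orthonormal_cols_def by auto

lemma orthonormal_cols_mono: "orthonormal_cols I r U \<Longrightarrow> r' \<le> r \<Longrightarrow> orthonormal_cols I r' U"
  unfolding orthonormal_cols_def by auto

lemma sqnorm_col:
  assumes "orthonormal_cols I r W" "k < r"
  shows "sqnorm I (\<lambda>i. W i k) = 1"
proof -
  have "complex_of_real (sqnorm I (\<lambda>i. W i k)) = (\<Sum>i<I. cnj (W i k) * W i k)"
    unfolding sqnorm_eq_cinner cinner_def by (simp add: mult.commute)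
  also have "\<dots> = 1" using assms unfolding orthonormal_cols_def by auto
  finally show ?thesis by simp
qed

lemma sqnorm_mat_vec:
  assumes "orthonormal_cols I r W"
  shows "sqnorm I (mat_vec r W y) = sqnorm r y"
proof -
  have "complex_of_real (sqnorm I (mat_vec r W y)) = cinner r y (adj_vec I W (mat_vec r W y))"
    by (simp add: sqnorm_eq_cinner cinner_mat_vec)
  also have "\<dots> = cinner r y y" using adj_vec_mat_vec[OF assms] by (intro cinner_cong) auto
  finally show ?thesis by (simp flip: sqnorm_eq_cinner)
qed

lemma sqnorm_diff_mat_vec:
  assumes "orthonormal_cols I r W"
  shows "sqnorm I (\<lambda>i. u i - mat_vec r W y i)
           = sqnorm I u + sqnorm r y - 2 * Re (cinner r (adj_vec I W u) y)"
proof -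
  have "cinner I u (mat_vec r W y) = cinner r (adj_vec I W u) y"
    by (simp add: cinner_commute[of I u] cinner_mat_vec cinner_commute[of r y])
  then show ?thesis by (simp add: sqnorm_diff sqnorm_mat_vec[OF assms])
qed

lemma sqnorm_adj_vec_le:
  assumes "orthonormal_cols I r W"
  shows "sqnorm r (adj_vec I W u) \<le> sqnorm I u"
proof -
  let ?y = "adj_vec I W u"
  have "0 \<le> sqnorm I (\<lambda>i. u i - mat_vec r W ?y i)" by (rule sqnorm_nonneg)
  also have "\<dots> = sqnorm I u - sqnorm r ?y"
    by (simp add: sqnorm_diff_mat_vec[OF assms] flip: sqnorm_eq_cinner)
  finally show ?thesis by simp
qed

lemma sqnorm_diff_mat_vec_ge:
  assumes "orthonormal_cols I r W"
  shows "sqnorm I u - sqnorm r (adj_vec I W u) \<le> sqnorm I (\<lambda>i. u i - mat_vec r W y i)"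
proof -
  have "0 \<le> sqnorm r (\<lambda>l. adj_vec I W u l - y l)" by (rule sqnorm_nonneg)
  then show ?thesis using sqnorm_diff_mat_vec[OF assms, of u y] by (simp add: sqnorm_diff)
qed

text \<open>With \<open>P = W W\<^sup>H\<close>: the residual \<open>u - P u\<close> is orthogonal to the range of \<open>P\<close>, and
  \<open>P\<close> does not increase norms.\<close>

lemma sqnorm_diff_projection_le:
  assumes W: "orthonormal_cols I r W"
  shows "sqnorm I (\<lambda>i. u i - mat_vec r W (adj_vec I W v) i)
     \<le> sqnorm I (\<lambda>i. u i - mat_vec r W (adj_vec I W u) i) + sqnorm I (\<lambda>i. u i - v i)"
proof -
  define x where "x = (\<lambda>i. u i - mat_vec r W (adj_vec I W u) i)"
  define d where "d = (\<lambda>i. u i - v i)"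
  have split: "u i - mat_vec r W (adj_vec I W v) i = x i + mat_vec r W (adj_vec I W d) i" for i
    unfolding x_def d_def adj_vec_diff[abs_def] mat_vec_diff by simp
  have "cinner I (mat_vec r W (adj_vec I W d)) x = cinner r (adj_vec I W d) (\<lambda>_. 0)"
    unfolding cinner_mat_vec using adj_vec_mat_vec[OF W]
    by (intro cinner_cong) (auto simp: x_def adj_vec_diff)
  then have orth: "cinner I x (mat_vec r W (adj_vec I W d)) = 0"
    by (subst cinner_commute) (simp add: cinner_def)
  have "sqnorm I (\<lambda>i. u i - mat_vec r W (adj_vec I W v) i)
      = sqnorm I x + sqnorm r (adj_vec I W d)"
    by (simp add: split sqnorm_add orth sqnorm_mat_vec[OF W])
  also have "\<dots> \<le> sqnorm I x + sqnorm I d" using sqnorm_adj_vec_le[OF W, of d] by simp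
  finally show ?thesis unfolding x_def d_def .
qed

lemma sqnorm_residual_unitary:
  assumes U: "cunitary I U" and "r \<le> I"
  shows "sqnorm I (\<lambda>i. u i - mat_vec r U (adj_vec I U u) i) = (\<Sum>l\<in>{r..<I}. (cmod (adj_vec I U u l))\<^sup>2)"
proof -
  let ?y = "adj_vec I U u"
  have "sqnorm I (\<lambda>i. u i - mat_vec r U ?y i) = sqnorm I (mat_vec I U (\<lambda>l. if l < r then 0 else ?y l))"
  proof (rule sqnorm_cong)
    fix i assume "i < I"
    then have "u i = mat_vec I U ?y i" by (simp add: mat_vec_adj_vec_unitary[OF U])
    moreover have "mat_vec r U ?y i = (\<Sum>l<I. if l < r then U i l * ?y l else 0)"
      unfolding mat_vec_def sum_lessThan_if_less using \<open>r \<le> I\<close> by (simp add: min_absorb2)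
    ultimately show "u i - mat_vec r U ?y i = mat_vec I U (\<lambda>l. if l < r then 0 else ?y l) i"
      unfolding mat_vec_def by (simp add: sum_subtractf[symmetric] if_distrib cong: if_cong)
  qed
  also have "\<dots> = sqnorm I (\<lambda>l. if l < r then 0 else ?y l)"
    by (rule sqnorm_mat_vec[OF cunitary_imp_orthonormal_cols[OF U]])
  also have "\<dots> = (\<Sum>l\<in>{r..<I}. (cmod (?y l))\<^sup>2)"
    unfolding sqnorm_def sum_lessThan_if_not_less[symmetric] by (intro sum.cong) auto
  finally show ?thesis .
qed

lemma sqnorm_adj_vec_unitary:
  assumes "cunitary I U"
  shows "sqnorm I u = sqnorm I (adj_vec I U u)"
  using sqnorm_residual_unitary[OF assms, of 0 u] by (simp add: mat_vec_def sqnorm_def atLeast0LessThan)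

section \<open>Truncation error of a matrix SVD\<close>

lemma adj_vec_svd_col:
  assumes svd: "is_svd I J M U S V" and "l < I" "j < J"
  shows "adj_vec I U (\<lambda>i. M i j) l = (if l < J then S l l * cnj (V j l) else 0)"
proof -
  have U: "cunitary I U" using svd unfolding is_svd_def by auto
  have "adj_vec I U (\<lambda>i. M i j) l = (\<Sum>i<I. \<Sum>a<I. \<Sum>b<J. cnj (U i l) * U i a * S a b * cnj (V j b))"
    unfolding adj_vec_def using svd \<open>j < J\<close> unfolding is_svd_def
    by (intro sum.cong) (auto simp: sum_distrib_left algebra_simps)
  also have "\<dots> = (\<Sum>a<I. (\<Sum>i<I. cnj (U i l) * U i a) * (\<Sum>b<J. S a b * cnj (V j b)))"
    by (subst sum.swap) (simp add: sum_distrib_left sum_distrib_right algebra_simps)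
  also have "\<dots> = (\<Sum>a<I. if l = a then (\<Sum>b<J. S a b * cnj (V j b)) else 0)"
    using U \<open>l < I\<close> unfolding cunitary_def by (intro sum.cong) auto
  also have "\<dots> = (\<Sum>b<J. S l b * cnj (V j b))" using \<open>l < I\<close> by simp
  also have "\<dots> = (\<Sum>b<J. if b = l then S l l * cnj (V j l) else 0)"
    using svd \<open>l < I\<close> unfolding is_svd_def by (intro sum.cong) auto
  finally show ?thesis by simp
qed

lemma svd_tail_eq:
  assumes svd: "is_svd I J M U S V"
  shows "(\<Sum>j<J. \<Sum>l\<in>{r..<I}. (cmod (adj_vec I U (\<lambda>i. M i j) l))\<^sup>2)
           = (\<Sum>l\<in>{r..<min I J}. (cmod (S l l))\<^sup>2)"
proof -
  have V: "orthonormal_cols J J V" using svd unfolding is_svd_def by (simp add: cunitary_imp_orthonormal_cols)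
  have "(\<Sum>j<J. \<Sum>l\<in>{r..<I}. (cmod (adj_vec I U (\<lambda>i. M i j) l))\<^sup>2)
      = (\<Sum>l\<in>{r..<I}. \<Sum>j<J. if l < J then (cmod (S l l))\<^sup>2 * (cmod (V j l))\<^sup>2 else 0)"
    using adj_vec_svd_col[OF svd] by (subst sum.swap) (auto simp: norm_mult power_mult_distrib intro!: sum.cong)
  also have "\<dots> = (\<Sum>l\<in>{r..<I}. if l < J then (cmod (S l l))\<^sup>2 else 0)"
    using sqnorm_col[OF V] by (intro sum.cong) (auto simp: sqnorm_def simp flip: sum_distrib_left)
  also have "\<dots> = (\<Sum>l\<in>{l \<in> {r..<I}. l < J}. (cmod (S l l))\<^sup>2)"
    by (rule sum.inter_filter[symmetric]) simp
  also have "{l \<in> {r..<I}. l < J} = {r..<min I J}" by auto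
  finally show ?thesis .
qed

lemma svd_truncation_error:
  assumes svd: "is_svd I J M U S V" and "r \<le> I"
  shows "(\<Sum>j<J. sqnorm I (\<lambda>i. M i j - mat_vec r U (adj_vec I U (\<lambda>i'. M i' j)) i))
           = (\<Sum>l\<in>{r..<min I J}. (cmod (S l l))\<^sup>2)"
proof -
  have "cunitary I U" using svd unfolding is_svd_def by simp
  then show ?thesis using svd_tail_eq[OF svd] by (simp add: sqnorm_residual_unitary \<open>r \<le> I\<close>)
qed

lemma svd_sum_sqnorm_cols:
  assumes svd: "is_svd I J M U S V"
  shows "(\<Sum>j<J. sqnorm I (\<lambda>i. M i j)) = (\<Sum>l<min I J. (cmod (S l l))\<^sup>2)"
proof -
  have U: "cunitary I U" using svd unfolding is_svd_def by simp
  have "sqnorm I (\<lambda>i. M i j) = (\<Sum>l<I. (cmod (adj_vec I U (\<lambda>i. M i j) l))\<^sup>2)" for j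
    by (subst sqnorm_adj_vec_unitary[OF U]) (simp add: sqnorm_def)
  then show ?thesis using svd_tail_eq[OF svd, of 0] by (simp add: atLeast0LessThan)
qed

lemma svd_sq_singular_antimono:
  assumes svd: "is_svd I J M U S V" and "i \<le> j" "j < min I J"
  shows "(cmod (S j j))\<^sup>2 \<le> (cmod (S i i))\<^sup>2"
proof -
  have cmod_Re: "cmod z = Re z" if "z \<in> \<real>" "0 \<le> Re z" for z
    using that by (metis Reals_cases Re_complex_of_real norm_of_real abs_of_nonneg)
  have "S i i \<in> \<real>" "0 \<le> Re (S i i)" "S j j \<in> \<real>" "0 \<le> Re (S j j)" "Re (S j j) \<le> Re (S i i)"
    using svd assms(2,3) unfolding is_svd_def by auto
  then show ?thesis by (simp add: cmod_Re power_mono)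
qed

lemma adj_vec_svd_col_expansion:
  assumes svd: "is_svd I J M U S V" and "j < J"
  shows "adj_vec I W (\<lambda>i. M i j) k = (\<Sum>l<min I J. adj_vec I W (\<lambda>i. U i l) k * S l l * cnj (V j l))"
proof -
  have U: "cunitary I U" using svd unfolding is_svd_def by simp
  let ?X = "adj_vec I U (\<lambda>i. M i j)"
  have "adj_vec I W (\<lambda>i. M i j) k = adj_vec I W (mat_vec I U ?X) k"
    unfolding adj_vec_def[of I W] by (intro sum.cong) (simp_all add: mat_vec_adj_vec_unitary[OF U])
  also have "\<dots> = (\<Sum>i<I. \<Sum>l<I. cnj (W i k) * U i l * ?X l)"
    unfolding adj_vec_def[of I W] mat_vec_def by (simp add: sum_distrib_left mult.assoc)
  also have "\<dots> = (\<Sum>l<I. adj_vec I W (\<lambda>i. U i l) k * ?X l)"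
    unfolding adj_vec_def[of I W] by (subst sum.swap) (simp add: sum_distrib_right)
  also have "\<dots> = (\<Sum>l<I. if l < J then adj_vec I W (\<lambda>i. U i l) k * S l l * cnj (V j l) else 0)"
    using adj_vec_svd_col[OF svd _ \<open>j < J\<close>] by (intro sum.cong) auto
  finally show ?thesis by (simp add: sum_lessThan_if_less)
qed

lemma svd_sum_sqnorm_adj_cols:
  assumes svd: "is_svd I J M U S V"
  shows "(\<Sum>j<J. sqnorm r (adj_vec I W (\<lambda>i. M i j)))
           = (\<Sum>l<min I J. sqnorm r (adj_vec I W (\<lambda>i. U i l)) * (cmod (S l l))\<^sup>2)"
proof -
  have V: "orthonormal_cols J J V" using svd unfolding is_svd_def by (simp add: cunitary_imp_orthonormal_cols)
  define y where "y k l = cnj (if l < I then adj_vec I W (\<lambda>i. U i l) k * S l l else 0)" for k l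
  have "adj_vec I W (\<lambda>i. M i j) k = cnj (mat_vec J V (y k) j)" if "j < J" for j k
    unfolding adj_vec_svd_col_expansion[OF svd that] mat_vec_def y_def
    by (simp add: cnj_sum sum_lessThan_if_less min.commute mult.commute if_distrib cong: if_cong)
  then have "(\<Sum>j<J. sqnorm r (adj_vec I W (\<lambda>i. M i j))) = (\<Sum>k<r. sqnorm J (mat_vec J V (y k)))"
    unfolding sqnorm_def by (subst sum.swap) (auto intro!: sum.cong)
  also have "\<dots> = (\<Sum>k<r. sqnorm J (y k))" by (simp add: sqnorm_mat_vec[OF V])
  also have "\<dots> = (\<Sum>l<J. \<Sum>k<r. if l < I then (cmod (adj_vec I W (\<lambda>i. U i l) k))\<^sup>2 * (cmod (S l l))\<^sup>2 else 0)"
    unfolding sqnorm_def y_def by (subst sum.swap) (auto simp: norm_mult power_mult_distrib intro!: sum.cong)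
  also have "\<dots> = (\<Sum>l<J. if l < I then sqnorm r (adj_vec I W (\<lambda>i. U i l)) * (cmod (S l l))\<^sup>2 else 0)"
    unfolding sqnorm_def by (intro sum.cong) (simp_all add: sum_distrib_right)
  also have "\<dots> = (\<Sum>l<min I J. sqnorm r (adj_vec I W (\<lambda>i. U i l)) * (cmod (S l l))\<^sup>2)"
    by (simp add: sum_lessThan_if_less min.commute)
  finally show ?thesis .
qed

lemma sum_sqnorm_adj_unitary_cols:
  assumes W: "orthonormal_cols I r W" and U: "cunitary I U"
  shows "(\<Sum>l<I. sqnorm r (adj_vec I W (\<lambda>i. U i l))) = real r"
proof -
  have "adj_vec I W (\<lambda>i. U i l) k = cnj (adj_vec I U (\<lambda>i. W i k) l)" for k l
    unfolding adj_vec_def by (simp add: cnj_sum mult.commute)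
  then have "(\<Sum>l<I. sqnorm r (adj_vec I W (\<lambda>i. U i l))) = (\<Sum>k<r. sqnorm I (adj_vec I U (\<lambda>i. W i k)))"
    unfolding sqnorm_def by (subst sum.swap) simp
  also have "\<dots> = (\<Sum>k<r. sqnorm I (\<lambda>i. W i k))" by (simp flip: sqnorm_adj_vec_unitary[OF U])
  also have "\<dots> = real r" by (simp add: sqnorm_col[OF W])
  finally show ?thesis .
qed

lemma weighted_sum_le_sum_first:
  fixes w s :: "nat \<Rightarrow> real"
  assumes w: "\<And>m. m < L \<Longrightarrow> 0 \<le> w m \<and> w m \<le> 1" and w_sum: "(\<Sum>m<L. w m) \<le> real r"
    and s: "\<And>m. m < L \<Longrightarrow> 0 \<le> s m" and s_antimono: "\<And>i j. i \<le> j \<Longrightarrow> j < L \<Longrightarrow> s j \<le> s i"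
  shows "(\<Sum>m<L. w m * s m) \<le> (\<Sum>m<min r L. s m)"
proof (cases "L \<le> r")
  case True
  have "(\<Sum>m<L. w m * s m) \<le> (\<Sum>m<L. s m)"
    using w s by (intro sum_mono) (simp add: mult_left_le_one_le)
  with True show ?thesis by (simp add: min_absorb2)
next
  case False
  define t where "t = s r"
  have "0 \<le> t" using s False by (simp add: t_def)
  have "(\<Sum>m<L. w m * s m) \<le> (\<Sum>m<L. w m * t + (if m < r then s m - t else 0))"
  proof (rule sum_mono)
    fix m assume "m \<in> {..<L}"
    show "w m * s m \<le> w m * t + (if m < r then s m - t else 0)"
    proof (cases "m < r")
      case True
      then have "0 \<le> (1 - w m) * (s m - t)"
        using w s_antimono \<open>m \<in> {..<L}\<close> False by (simp add: t_def)
      with True show ?thesis by (simp add: algebra_simps)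
    next
      case False
      then have "s m \<le> t" using s_antimono \<open>m \<in> {..<L}\<close> by (simp add: t_def)
      with False show ?thesis using w \<open>m \<in> {..<L}\<close> by (simp add: mult_left_mono)
    qed
  qed
  also have "\<dots> = t * (\<Sum>m<L. w m) + (\<Sum>m<r. s m) - real r * t"
    using False by (simp add: sum.distrib sum_distrib_left mult.commute sum_lessThan_if_less
        min_absorb2 sum_subtractf)
  also have "\<dots> \<le> (\<Sum>m<r. s m)" using mult_left_mono[OF w_sum \<open>0 \<le> t\<close>] by (simp add: mult.commute)
  finally show ?thesis using False by (simp add: min_absorb1)
qed

lemma svd_tail_le_approx_error:
  assumes svd: "is_svd I J M U S V" and W: "orthonormal_cols I r W" and "r \<le> I"
  shows "(\<Sum>l\<in>{r..<min I J}. (cmod (S l l))\<^sup>2) \<le> (\<Sum>j<J. sqnorm I (\<lambda>i. M i j - mat_vec r W (C j) i))"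
proof -
  have U: "cunitary I U" using svd unfolding is_svd_def by simp
  define L where "L = min I J"
  define s where "s l = (cmod (S l l))\<^sup>2" for l
  define w where "w l = sqnorm r (adj_vec I W (\<lambda>i. U i l))" for l
  have w: "0 \<le> w m \<and> w m \<le> 1" if "m < L" for m
    using sqnorm_adj_vec_le[OF W, of "\<lambda>i. U i m"] sqnorm_col[OF cunitary_imp_orthonormal_cols[OF U], of m]
      that by (simp add: w_def L_def sqnorm_nonneg)
  have "(\<Sum>m<L. w m) \<le> (\<Sum>m<I. w m)"
    by (rule sum_mono2) (auto simp: L_def w_def sqnorm_nonneg)
  also have "\<dots> = real r" unfolding w_def by (rule sum_sqnorm_adj_unitary_cols[OF W U])
  finally have w_sum: "(\<Sum>m<L. w m) \<le> real r" .
  have s_antimono: "s j \<le> s i" if "i \<le> j" "j < L" for i j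
    using svd_sq_singular_antimono[OF svd that[unfolded L_def]] by (simp add: s_def)
  have "{..<L} = {..<min r L} \<union> {r..<L}" by auto
  then have "(\<Sum>l\<in>{r..<L}. s l) = (\<Sum>l<L. s l) - (\<Sum>l<min r L. s l)"
    by (simp add: sum.union_disjoint[of "{..<min r L}" "{r..<L}"] disjoint_iff)
  also have "\<dots> \<le> (\<Sum>l<L. s l) - (\<Sum>l<L. w l * s l)"
    using weighted_sum_le_sum_first[OF w w_sum _ s_antimono] by (simp add: s_def)
  also have "\<dots> = (\<Sum>j<J. sqnorm I (\<lambda>i. M i j) - sqnorm r (adj_vec I W (\<lambda>i. M i j)))"
    unfolding sum_subtractf svd_sum_sqnorm_cols[OF svd] svd_sum_sqnorm_adj_cols[OF svd]
    by (simp add: L_def s_def w_def)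
  also have "\<dots> \<le> (\<Sum>j<J. sqnorm I (\<lambda>i. M i j - mat_vec r W (C j) i))"
    by (rule sum_mono) (rule sqnorm_diff_mat_vec_ge[OF W])
  finally show ?thesis by (simp add: L_def s_def)
qed

section \<open>Mode-\<open>n\<close> unfoldings\<close>

definition unfold_index :: "nat list \<Rightarrow> nat \<Rightarrow> nat \<Rightarrow> nat \<Rightarrow> nat list" where
  "unfold_index Is n i j = map (\<lambda>m. if m = n then i
        else (j div (\<Prod>l\<in>{0..<m} - {n}. Is ! l)) mod (Is ! m)) [0..<length Is]"

lemma unfold_eq_unfold_index: "unfold Is n A i j = A (unfold_index Is n i j)"
  unfolding unfold_def unfold_index_def by simp

lemma nth_unfold_index_mode: "n < length Is \<Longrightarrow> unfold_index Is n i j ! n = i"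
  unfolding unfold_index_def by simp

lemma unfold_index_update_mode: "n < length Is \<Longrightarrow> (unfold_index Is n i j)[n := l] = unfold_index Is n l j"
  unfolding unfold_index_def by (rule nth_equalityI) (auto simp: nth_list_update)

lemma div_mod_mod_dvd:
  fixes j w a b :: nat
  assumes "0 < a" "a * b dvd w"
  shows "j mod w div a mod b = j div a mod b"
proof -
  have digit: "x div a mod b = x mod (a * b) div a" for x :: nat
    using mod_mult2_eq[of x a b] assms(1) by simp
  have "j mod w mod (a * b) = j mod (a * b)" using assms(2) by (rule mod_mod_cancel)
  then show ?thesis by (simp add: digit)
qed

lemma mixed_radix_digits_inj:
  fixes b :: "nat \<Rightarrow> nat"
  assumes "\<forall>l<N. 0 < b l" "j < (\<Prod>l\<in>{0..<N} - {n}. b l)" "j' < (\<Prod>l\<in>{0..<N} - {n}. b l)"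
    "\<forall>m<N. m \<noteq> n \<longrightarrow> j div (\<Prod>l\<in>{0..<m} - {n}. b l) mod b m = j' div (\<Prod>l\<in>{0..<m} - {n}. b l) mod b m"
  shows "j = j'"
  using assms
proof (induction N arbitrary: j j')
  case 0
  then show ?case by simp
next
  case (Suc N)
  define w where "w = (\<Prod>l\<in>{0..<N} - {n}. b l)"
  have "0 < w" unfolding w_def using Suc.prems(1) by (intro prod_pos) auto
  show ?case
  proof (cases "N = n")
    case True
    then have "{0..<Suc N} - {n} = {0..<N} - {n}" by auto
    then show ?thesis by (intro Suc.IH) (use Suc.prems in auto)
  next
    case False
    then have "{0..<Suc N} - {n} = insert N ({0..<N} - {n})" by auto
    then have radix: "(\<Prod>l\<in>{0..<Suc N} - {n}. b l) = b N * w" by (simp add: w_def)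
    have low_digits: "x mod w div (\<Prod>l\<in>{0..<m} - {n}. b l) mod b m = x div (\<Prod>l\<in>{0..<m} - {n}. b l) mod b m"
      if "m < N" "m \<noteq> n" for m x
    proof (rule div_mod_mod_dvd)
      show "0 < (\<Prod>l\<in>{0..<m} - {n}. b l)" using Suc.prems(1) that by (intro prod_pos) auto
      have "{0..<Suc m} - {n} = insert m ({0..<m} - {n})" using that by auto
      then have "(\<Prod>l\<in>{0..<m} - {n}. b l) * b m = (\<Prod>l\<in>{0..<Suc m} - {n}. b l)"
        by (simp add: mult.commute)
      also have "\<dots> dvd w" unfolding w_def by (rule prod_dvd_prod_subset) (use that in auto)
      finally show "(\<Prod>l\<in>{0..<m} - {n}. b l) * b m dvd w" .
    qed
    have "j mod w = j' mod w"
      using Suc.prems low_digits \<open>0 < w\<close> by (intro Suc.IH) (auto simp: w_def[symmetric])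
    moreover have "j div w = j' div w"
    proof -
      have "j div w < b N" "j' div w < b N"
        using Suc.prems(2,3) radix by (simp_all add: less_mult_imp_div_less)
      moreover have "j div w mod b N = j' div w mod b N" using Suc.prems(4) False by (auto simp: w_def)
      ultimately show ?thesis by simp
    qed
    ultimately show ?thesis by (metis div_mult_mod_eq)
  qed
qed

lemma tidx_Cons: "tidx (b # bs) = (\<lambda>(x, xs). x # xs) ` ({..<b} \<times> tidx bs)"
proof (rule set_eqI)
  fix ys
  show "ys \<in> tidx (b # bs) \<longleftrightarrow> ys \<in> (\<lambda>(x, xs). x # xs) ` ({..<b} \<times> tidx bs)"
  proof
    assume ys: "ys \<in> tidx (b # bs)"
    then obtain x xs where "ys = x # xs" unfolding tidx_def by (cases ys) auto
    moreover from ys this have "x < b" "xs \<in> tidx bs"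
      unfolding tidx_def by (auto dest: spec[of _ 0] spec[of _ "Suc _"])
    ultimately show "ys \<in> (\<lambda>(x, xs). x # xs) ` ({..<b} \<times> tidx bs)" by auto
  next
    assume "ys \<in> (\<lambda>(x, xs). x # xs) ` ({..<b} \<times> tidx bs)"
    then show "ys \<in> tidx (b # bs)" unfolding tidx_def by (auto simp: nth_Cons split: nat.split)
  qed
qed

lemma finite_card_tidx: "finite (tidx Is) \<and> card (tidx Is) = prod_list Is"
proof (induction Is)
  case Nil
  have "tidx [] = {[]}" unfolding tidx_def by auto
  then show ?case by simp
next
  case (Cons b bs)
  have "inj_on (\<lambda>(x, xs). x # xs) ({..<b} \<times> tidx bs)" by (auto simp: inj_on_def)
  with Cons show ?case unfolding tidx_Cons by (simp add: card_image card_cartesian_product)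
qed

lemma bij_betw_unfold_index:
  assumes n: "n < length Is" and pos: "\<forall>m<length Is. 0 < Is ! m"
  shows "bij_betw (\<lambda>(i, j). unfold_index Is n i j) ({..<Is ! n} \<times> {..<ncols Is n}) (tidx Is)"
proof -
  let ?h = "\<lambda>(i, j). unfold_index Is n i j"
  let ?D = "{..<Is ! n} \<times> {..<ncols Is n}"
  have inj: "inj_on ?h ?D"
  proof (rule inj_onI)
    fix x y assume "x \<in> ?D" "y \<in> ?D" and "?h x = ?h y"
    then obtain i j i' j' where x: "x = (i, j)" and y: "y = (i', j')"
      and "(i, j) \<in> ?D" "(i', j') \<in> ?D" and eq: "unfold_index Is n i j = unfold_index Is n i' j'"
      by (cases x, cases y) auto
    have "i = i'" using arg_cong[OF eq, of "\<lambda>xs. xs ! n"] n by (simp add: nth_unfold_index_mode)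
    moreover have "j = j'"
    proof (rule mixed_radix_digits_inj[where b = "\<lambda>l. Is ! l" and N = "length Is" and n = n])
      show "\<forall>m<length Is. m \<noteq> n \<longrightarrow> j div (\<Prod>l\<in>{0..<m} - {n}. Is ! l) mod Is ! m
                                    = j' div (\<Prod>l\<in>{0..<m} - {n}. Is ! l) mod Is ! m"
      proof (intro allI impI)
        fix m assume "m < length Is" "m \<noteq> n"
        with arg_cong[OF eq, of "\<lambda>xs. xs ! m"]
        show "j div (\<Prod>l\<in>{0..<m} - {n}. Is ! l) mod Is ! m = j' div (\<Prod>l\<in>{0..<m} - {n}. Is ! l) mod Is ! m"
          unfolding unfold_index_def by simp
      qed
    qed (use pos \<open>(i, j) \<in> ?D\<close> \<open>(i', j') \<in> ?D\<close> in \<open>auto simp: ncols_def\<close>)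
    ultimately show "x = y" by (simp add: x y)
  qed
  have "?h ` ?D \<subseteq> tidx Is" using pos unfolding tidx_def unfold_index_def by auto
  moreover have "card (tidx Is) = Is ! n * ncols Is n"
    using finite_card_tidx[of Is] n
    by (simp add: prod.list_conv_set_nth ncols_def atLeast0LessThan prod.remove)
  then have "card (?h ` ?D) = card (tidx Is)"
    using inj by (simp add: card_image card_cartesian_product)
  ultimately have "?h ` ?D = tidx Is"
    using finite_card_tidx[of Is] by (intro card_subset_eq) auto
  with inj show ?thesis by (simp add: bij_betw_def)
qed

lemma sum_tidx_unfold:
  assumes "n < length Is" and "\<forall>m<length Is. 0 < Is ! m"
  shows "(\<Sum>xs\<in>tidx Is. f xs) = (\<Sum>j<ncols Is n. \<Sum>i<Is ! n. f (unfold_index Is n i j))"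
proof -
  have "(\<Sum>xs\<in>tidx Is. f xs) = (\<Sum>(i, j)\<in>{..<Is ! n} \<times> {..<ncols Is n}. f (unfold_index Is n i j))"
    using sum.reindex_bij_betw[OF bij_betw_unfold_index[OF assms], of f] by (simp add: split_def)
  also have "\<dots> = (\<Sum>i<Is ! n. \<Sum>j<ncols Is n. f (unfold_index Is n i j))"
    by (simp add: sum.cartesian_product)
  finally show ?thesis by (simp add: sum.swap[of _ "{..<Is ! n}"])
qed

section \<open>Truncated Hot-SVD of a single slice\<close>

text \<open>Scalar counterparts of \<open>nmode\<close> and \<open>mmprod\<close>: in the transform domain each frontal slice
  is multiplied separately.\<close>

definition cnmode :: "nat \<Rightarrow> nat \<Rightarrow> (nat list \<Rightarrow> complex) \<Rightarrow> (nat \<Rightarrow> nat \<Rightarrow> complex) \<Rightarrow> nat list \<Rightarrow> complex" where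
  "cnmode K n a U = (\<lambda>xs. \<Sum>i<K. a (xs[n := i]) * U (xs ! n) i)"

definition cmmprod :: "nat list \<Rightarrow> (nat list \<Rightarrow> complex) \<Rightarrow> (nat \<Rightarrow> nat \<Rightarrow> nat \<Rightarrow> complex) \<Rightarrow> nat list \<Rightarrow> complex" where
  "cmmprod Ks a Us = foldl (\<lambda>b n. cnmode (Ks ! n) n b (Us n)) a [0..<length Ks]"

definition tsqnorm :: "nat list \<Rightarrow> (nat list \<Rightarrow> complex) \<Rightarrow> real" where
  "tsqnorm Is a = (\<Sum>xs\<in>tidx Is. (cmod (a xs))\<^sup>2)"

lemma cnmode_unfold_index:
  "n < length Is \<Longrightarrow> cnmode K n a U (unfold_index Is n i j) = mat_vec K U (\<lambda>l. a (unfold_index Is n l j)) i"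
  unfolding cnmode_def mat_vec_def by (simp add: unfold_index_update_mode nth_unfold_index_mode mult.commute)

lemma cnmode_cnmode_adj_unfold_index:
  assumes "n < length Is"
  shows "cnmode r n (cnmode K n a (\<lambda>i j. cnj (W j i))) W (unfold_index Is n i j)
           = mat_vec r W (adj_vec K W (\<lambda>i'. a (unfold_index Is n i' j))) i"
  using assms by (simp add: cnmode_unfold_index) (simp add: mat_vec_def adj_vec_def mult.commute)

lemma cnmode_commute:
  assumes "m \<noteq> n"
  shows "cnmode K n (cnmode K' m a U') U = cnmode K' m (cnmode K n a U) U'"
proof (rule ext)
  fix xs
  have "cnmode K n (cnmode K' m a U') U xs = (\<Sum>i<K. \<Sum>j<K'. a (xs[n := i, m := j]) * U' (xs ! m) j * U (xs ! n) i)"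
    unfolding cnmode_def using assms by (simp add: sum_distrib_right)
  also have "\<dots> = (\<Sum>j<K'. \<Sum>i<K. a (xs[m := j, n := i]) * U (xs ! n) i * U' (xs ! m) j)"
    by (subst sum.swap) (simp add: list_update_swap[OF assms] mult.commute mult.left_commute)
  also have "\<dots> = cnmode K' m (cnmode K n a U) U' xs"
    unfolding cnmode_def using assms by (simp add: sum_distrib_right)
  finally show "cnmode K n (cnmode K' m a U') U xs = cnmode K' m (cnmode K n a U) U' xs" .
qed

lemma foldl_cnmode_commute:
  "n \<notin> set ns \<Longrightarrow> foldl (\<lambda>b m. cnmode (Ks ! m) m b (Us m)) (cnmode K n a U) ns
     = cnmode K n (foldl (\<lambda>b m. cnmode (Ks ! m) m b (Us m)) a ns) U"
  by (induction ns arbitrary: a) (simp_all add: cnmode_commute)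

lemma foldl_cnmode_last:
  assumes "n \<in> set ns"
  obtains b where "foldl (\<lambda>b m. cnmode (Ks ! m) m b (Us m)) a ns = cnmode (Ks ! n) n b (Us n)"
proof -
  have "\<exists>b. foldl (\<lambda>b m. cnmode (Ks ! m) m b (Us m)) a ns = cnmode (Ks ! n) n b (Us n)"
    using assms
  proof (induction ns rule: rev_induct)
    case (snoc m ns)
    show ?case
    proof (cases "m = n")
      case False
      with snoc obtain b where "foldl (\<lambda>b m. cnmode (Ks ! m) m b (Us m)) a ns = cnmode (Ks ! n) n b (Us n)"
        by auto
      with False show ?thesis by (auto simp: cnmode_commute[of n m])
    qed auto
  qed simp
  with that show ?thesis by blast
qed

lemma foldl_cnmode_interleave:
  "foldl (\<lambda>b m. cnmode (Ks' ! m) m b (G m)) (foldl (\<lambda>b m. cnmode (Ks ! m) m b (F m)) a [0..<N]) [0..<N]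
   = foldl (\<lambda>b m. cnmode (Ks' ! m) m (cnmode (Ks ! m) m b (F m)) (G m)) a [0..<N]"
  by (induction N) (simp_all add: foldl_cnmode_commute)

lemma tsqnorm_diff_mode_projection_le:
  assumes n: "n < length Is" and pos: "\<forall>m<length Is. 0 < Is ! m" and "r \<le> Is ! n"
    and svd: "is_svd (Is ! n) (ncols Is n) (\<lambda>i j. a (unfold_index Is n i j)) U S V"
    and W: "\<And>i l. l < r \<Longrightarrow> W i l = U i l"
  shows "tsqnorm Is (\<lambda>xs. a xs - cnmode r n (cnmode (Is ! n) n b (\<lambda>i j. cnj (W j i))) W xs)
           \<le> tsqnorm Is (\<lambda>xs. a xs - b xs) + (\<Sum>i\<in>{r..<min (Is ! n) (ncols Is n)}. (cmod (S i i))\<^sup>2)"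
proof -
  let ?I = "Is ! n" and ?J = "ncols Is n"
  let ?col = "\<lambda>c j i. c (unfold_index Is n i j)"
  have U: "orthonormal_cols ?I r U"
    using svd \<open>r \<le> ?I\<close> unfolding is_svd_def by (auto intro: orthonormal_cols_mono cunitary_imp_orthonormal_cols)
  have proj: "mat_vec r W (adj_vec ?I W u) i = mat_vec r U (adj_vec ?I U u) i" for u i
    unfolding mat_vec_def adj_vec_def using W by simp
  have "tsqnorm Is (\<lambda>xs. a xs - cnmode r n (cnmode ?I n b (\<lambda>i j. cnj (W j i))) W xs)
      = (\<Sum>j<?J. sqnorm ?I (\<lambda>i. ?col a j i - mat_vec r U (adj_vec ?I U (?col b j)) i))"
    unfolding tsqnorm_def sum_tidx_unfold[OF n pos] sqnorm_def
    by (simp add: cnmode_cnmode_adj_unfold_index[OF n] proj)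
  also have "\<dots> \<le> (\<Sum>j<?J. sqnorm ?I (\<lambda>i. ?col a j i - mat_vec r U (adj_vec ?I U (?col a j)) i)
                          + sqnorm ?I (\<lambda>i. ?col a j i - ?col b j i))"
    by (rule sum_mono) (rule sqnorm_diff_projection_le[OF U])
  also have "\<dots> = (\<Sum>i\<in>{r..<min ?I ?J}. (cmod (S i i))\<^sup>2) + tsqnorm Is (\<lambda>xs. a xs - b xs)"
    unfolding sum.distrib svd_truncation_error[OF svd \<open>r \<le> ?I\<close>]
    by (simp add: tsqnorm_def sum_tidx_unfold[OF n pos] sqnorm_def)
  finally show ?thesis by simp
qed

lemma tsqnorm_truncated_hosvd_le:
  assumes "length Ips = length Is" and pos: "\<forall>m<length Is. 0 < Is ! m"
    and le: "\<forall>n<length Is. Ips ! n \<le> Is ! n"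
    and svd: "\<forall>n<length Is. is_svd (Is ! n) (ncols Is n) (\<lambda>i j. a (unfold_index Is n i j)) (U n) (S n) (V n)"
  defines "Ub \<equiv> \<lambda>n i j. if j < Ips ! n then U n i j else 0"
  shows "tsqnorm Is (\<lambda>xs. a xs - cmmprod Ips (cmmprod Is a (\<lambda>n i j. cnj (Ub n j i))) Ub xs)
     \<le> (\<Sum>n<length Is. \<Sum>i\<in>{Ips ! n..<min (Is ! n) (ncols Is n)}. (cmod (S n i i))\<^sup>2)"
proof -
  define P where "P n b = cnmode (Ips ! n) n (cnmode (Is ! n) n b (\<lambda>i j. cnj (Ub n j i))) (Ub n)" for n b
  define tail where "tail n = (\<Sum>i\<in>{Ips ! n..<min (Is ! n) (ncols Is n)}. (cmod (S n i i))\<^sup>2)" for n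
  have "tsqnorm Is (\<lambda>xs. a xs - foldl (\<lambda>b n. P n b) a [0..<N] xs) \<le> (\<Sum>n<N. tail n)"
    if "N \<le> length Is" for N
    using that
  proof (induction N)
    case 0
    then show ?case by (simp add: tsqnorm_def)
  next
    case (Suc N)
    have "tsqnorm Is (\<lambda>xs. a xs - P N (foldl (\<lambda>b n. P n b) a [0..<N]) xs)
        \<le> tsqnorm Is (\<lambda>xs. a xs - foldl (\<lambda>b n. P n b) a [0..<N] xs) + tail N"
      unfolding P_def tail_def using Suc.prems pos le svd
      by (intro tsqnorm_diff_mode_projection_le[where U = "U N" and S = "S N" and V = "V N"])
        (auto simp: Ub_def)
    with Suc show ?case by simp
  qed
  moreover have "cmmprod Ips (cmmprod Is a (\<lambda>n i j. cnj (Ub n j i))) Ub = foldl (\<lambda>b n. P n b) a [0..<length Is]"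
    unfolding cmmprod_def P_def \<open>length Ips = length Is\<close> by (rule foldl_cnmode_interleave)
  ultimately show ?thesis unfolding tail_def by simp
qed

lemma svd_tail_le_cmmprod_error:
  assumes "length Ips = length Is" and pos: "\<forall>m<length Is. 0 < Is ! m"
    and n: "n < length Is" and "Ips ! n \<le> Is ! n"
    and svd: "is_svd (Is ! n) (ncols Is n) (\<lambda>i j. a (unfold_index Is n i j)) U S V"
    and W: "orthonormal_cols (Is ! n) (Ips ! n) (Ws n)"
  shows "(\<Sum>i\<in>{Ips ! n..<min (Is ! n) (ncols Is n)}. (cmod (S i i))\<^sup>2) \<le> tsqnorm Is (\<lambda>xs. a xs - cmmprod Ips c Ws xs)"
proof -
  have "n \<in> set [0..<length Ips]" using n \<open>length Ips = length Is\<close> by simp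
  then obtain b where b: "cmmprod Ips c Ws = cnmode (Ips ! n) n b (Ws n)"
    unfolding cmmprod_def by (rule foldl_cnmode_last)
  have "(\<Sum>i\<in>{Ips ! n..<min (Is ! n) (ncols Is n)}. (cmod (S i i))\<^sup>2)
      \<le> (\<Sum>j<ncols Is n. sqnorm (Is ! n) (\<lambda>i. a (unfold_index Is n i j)
                                   - mat_vec (Ips ! n) (Ws n) (\<lambda>l. b (unfold_index Is n l j)) i))"
    by (rule svd_tail_le_approx_error[OF svd W \<open>Ips ! n \<le> Is ! n\<close>])
  also have "\<dots> = tsqnorm Is (\<lambda>xs. a xs - cmmprod Ips c Ws xs)"
    unfolding tsqnorm_def sum_tidx_unfold[OF n pos] b sqnorm_def by (simp add: cnmode_unfold_index[OF n])
  finally show ?thesis .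
qed

section \<open>The transform domain\<close>

definition is_right_inverse :: "nat \<Rightarrow> (nat \<Rightarrow> nat \<Rightarrow> complex) \<Rightarrow> (nat \<Rightarrow> nat \<Rightarrow> complex) \<Rightarrow> bool" where
  "is_right_inverse p M M' \<longleftrightarrow> (\<forall>i<p. \<forall>j<p. (\<Sum>l<p. M i l * M' l j) = (if i = j then 1 else 0))"

definition Tslice :: "nat \<Rightarrow> (nat \<Rightarrow> nat \<Rightarrow> complex) \<Rightarrow> tten \<Rightarrow> nat \<Rightarrow> nat list \<Rightarrow> complex" where
  "Tslice p Lm A k = (\<lambda>xs. Ltube p Lm (A xs) k)"

lemma Ltube_Ltube:
  assumes "is_right_inverse p M M'" "k < p"
  shows "Ltube p M (Ltube p M' f) k = f k"
proof -
  have "Ltube p M (Ltube p M' f) k = (\<Sum>j<p. \<Sum>l<p. M k j * M' j l * f l)"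
    unfolding Ltube_def by (simp add: sum_distrib_left mult.assoc)
  also have "\<dots> = (\<Sum>l<p. (\<Sum>j<p. M k j * M' j l) * f l)"
    by (subst sum.swap) (simp add: sum_distrib_right)
  also have "\<dots> = (\<Sum>l<p. if k = l then f l else 0)"
    using assms unfolding is_right_inverse_def by (intro sum.cong) auto
  finally show ?thesis using assms(2) by simp
qed

lemma Ltube_cong: "(\<And>t. t < p \<Longrightarrow> f t = g t) \<Longrightarrow> Ltube p M f k = Ltube p M g k"
  unfolding Ltube_def by (intro sum.cong) auto

lemma Ltube_sum: "finite s \<Longrightarrow> Ltube p M (\<lambda>t. \<Sum>i\<in>s. f i t) k = (\<Sum>i\<in>s. Ltube p M (f i) k)"
  unfolding Ltube_def by (simp add: sum_distrib_left sum.swap[of _ s])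

lemma Ltube_diff: "Ltube p M (\<lambda>t. f t - g t) k = Ltube p M f k - Ltube p M g k"
  unfolding Ltube_def by (simp add: sum_subtractf right_diff_distrib)

lemma Ltube_zero [simp]: "Ltube p M (\<lambda>_. 0) k = 0"
  unfolding Ltube_def by simp

lemma Ltube_tmult:
  "is_right_inverse p Lm Lmi \<Longrightarrow> k < p \<Longrightarrow> Ltube p Lm (tmult p Lm Lmi a b) k = Ltube p Lm a k * Ltube p Lm b k"
  unfolding tmult_def by (simp add: Ltube_Ltube)

lemma Lslice_tmH:
  "is_right_inverse p Lm Lmi \<Longrightarrow> k < p \<Longrightarrow> Lslice p Lm (tmH p Lm Lmi X) k = (\<lambda>i j. cnj (Lslice p Lm X k j i))"
  unfolding tmH_def Lslice_def by (simp add: Ltube_Ltube)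

lemma Lslice_tmId:
  "is_right_inverse p Lm Lmi \<Longrightarrow> k < p \<Longrightarrow> Lslice p Lm (tmId p Lmi) k = (\<lambda>i j. if i = j then 1 else 0)"
  unfolding tmId_def Lslice_def by (simp add: Ltube_Ltube if_distrib[of "\<lambda>f. Ltube p Lm f k"] cong: if_cong)

lemma Lslice_tmprod:
  "is_right_inverse p Lm Lmi \<Longrightarrow> k < p
     \<Longrightarrow> Lslice p Lm (tmprod p Lm Lmi J A B) k = (\<lambda>i l. \<Sum>j<J. Lslice p Lm A k i j * Lslice p Lm B k j l)"
  unfolding tmprod_def Lslice_def by (simp add: Ltube_sum Ltube_tmult)

lemma Lslice_tcols: "Lslice p Lm (tcols r U) k = (\<lambda>i j. if j < r then Lslice p Lm U k i j else 0)"
  unfolding tcols_def Lslice_def by (simp add: if_distrib[of "\<lambda>f. Ltube p Lm f k"] cong: if_cong)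

lemma Lslice_unfold: "Lslice p Lm (unfold Is n A) k = (\<lambda>i j. Tslice p Lm A k (unfold_index Is n i j))"
  unfolding Lslice_def Tslice_def unfold_eq_unfold_index ..

lemma is_svd_Tslice_unfold:
  assumes "is_tsvd p Lm (Is ! n) (ncols Is n) (unfold Is n A) U S V" "k < p"
  shows "is_svd (Is ! n) (ncols Is n) (\<lambda>i j. Tslice p Lm A k (unfold_index Is n i j))
           (Lslice p Lm U k) (Lslice p Lm S k) (Lslice p Lm V k)"
  using assms unfolding is_tsvd_def Lslice_unfold by blast

lemma Tslice_nmode:
  "is_right_inverse p Lm Lmi \<Longrightarrow> k < p
     \<Longrightarrow> Tslice p Lm (nmode p Lm Lmi K n A U) k = cnmode K n (Tslice p Lm A k) (Lslice p Lm U k)"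
  unfolding nmode_def cnmode_def Tslice_def Lslice_def by (simp add: Ltube_sum Ltube_tmult)

lemma Tslice_mmprod:
  assumes "is_right_inverse p Lm Lmi" "k < p"
  shows "Tslice p Lm (mmprod p Lm Lmi Ks A Us) k = cmmprod Ks (Tslice p Lm A k) (\<lambda>n. Lslice p Lm (Us n) k)"
proof -
  have "Tslice p Lm (foldl (\<lambda>B n. nmode p Lm Lmi (Ks ! n) n B (Us n)) A ns) k
      = foldl (\<lambda>b n. cnmode (Ks ! n) n b (Lslice p Lm (Us n) k)) (Tslice p Lm A k) ns" for ns
    by (induction ns arbitrary: A) (simp_all add: Tslice_nmode[OF assms])
  then show ?thesis unfolding mmprod_def cmmprod_def .
qed

lemma orthonormal_cols_Lslice:
  assumes "is_right_inverse p Lm Lmi" "k < p"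
    and "tmeq p r r (tmprod p Lm Lmi I (tmH p Lm Lmi W) W) (tmId p Lmi)"
  shows "orthonormal_cols I r (Lslice p Lm W k)"
  unfolding orthonormal_cols_def
proof (intro allI impI)
  fix l l' assume "l < r" "l' < r"
  with assms(3) have "Lslice p Lm (tmprod p Lm Lmi I (tmH p Lm Lmi W) W) k l l' = Lslice p Lm (tmId p Lmi) k l l'"
    unfolding tmeq_def Lslice_def by (intro Ltube_cong) auto
  then show "(\<Sum>i<I. cnj (Lslice p Lm W k i l) * Lslice p Lm W k i l') = (if l = l' then 1 else 0)"
    by (simp add: Lslice_tmprod Lslice_tmH Lslice_tmId assms(1,2))
qed

lemma tnorm_nonneg: "0 \<le> tnorm p Is F"
  unfolding tnorm_def by (simp add: sum_nonneg)

lemma Tslice_diff: "Tslice p Lm (\<lambda>xs t. A xs t - B xs t) k = (\<lambda>xs. Tslice p Lm A k xs - Tslice p Lm B k xs)"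
  unfolding Tslice_def by (simp add: Ltube_diff)

lemma ex_nonzero_iff_ex_Ltube_nonzero:
  assumes "is_right_inverse p M' M"
  shows "(\<exists>t<p. a t \<noteq> 0) \<longleftrightarrow> (\<exists>k<p. Ltube p M a k \<noteq> 0)"
proof
  assume "\<exists>t<p. a t \<noteq> 0"
  then obtain t where "t < p" "a t \<noteq> 0" by blast
  moreover have "a t = Ltube p M' (Ltube p M a) t" using Ltube_Ltube[OF assms \<open>t < p\<close>] by simp
  ultimately show "\<exists>k<p. Ltube p M a k \<noteq> 0" using Ltube_cong[of p "Ltube p M a" "\<lambda>_. 0" M' t] by auto
next
  assume "\<exists>k<p. Ltube p M a k \<noteq> 0"
  then show "\<exists>t<p. a t \<noteq> 0" using Ltube_cong[of p a "\<lambda>_. 0" M] by auto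
qed

lemma down_closed_eq_lessThan_card:
  fixes Z :: "nat set"
  assumes "finite Z" and down: "\<And>i j. i \<in> Z \<Longrightarrow> j \<le> i \<Longrightarrow> j \<in> Z"
  shows "Z = {..<card Z}"
proof -
  have "Z \<subseteq> {..<card Z}"
  proof
    fix i assume "i \<in> Z"
    then have "{..i} \<subseteq> Z" using down by auto
    then have "card {..i} \<le> card Z" using \<open>finite Z\<close> by (intro card_mono)
    then show "i \<in> {..<card Z}" by simp
  qed
  then show ?thesis by (intro card_subset_eq) auto
qed

lemma nonzero_diag_tubes_eq_lessThan_trank:
  assumes inv: "is_right_inverse p Lmi Lm"
    and svd: "\<forall>k<p. is_svd I J (X k) (Lslice p Lm U k) (Lslice p Lm S k) (Lslice p Lm V k)"
  shows "{i. i < min I J \<and> (\<exists>t<p. S i i t \<noteq> 0)} = {..<trank p I J S}"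
  unfolding trank_def
proof (rule down_closed_eq_lessThan_card)
  fix i j assume i: "i \<in> {i. i < min I J \<and> (\<exists>t<p. S i i t \<noteq> 0)}" and "j \<le> i"
  then obtain k where "k < p" and k: "Ltube p Lm (S i i) k \<noteq> 0"
    using ex_nonzero_iff_ex_Ltube_nonzero[OF inv] by auto
  have "Ltube p Lm (S i i) k \<in> \<real>" "0 \<le> Re (Ltube p Lm (S i i) k)"
    "Re (Ltube p Lm (S i i) k) \<le> Re (Ltube p Lm (S j j) k)"
    using svd \<open>k < p\<close> i \<open>j \<le> i\<close> unfolding is_svd_def Lslice_def by auto
  with k have "Ltube p Lm (S j j) k \<noteq> 0" by (auto elim!: Reals_cases)
  with \<open>k < p\<close> i \<open>j \<le> i\<close> show "j \<in> {i. i < min I J \<and> (\<exists>t<p. S i i t \<noteq> 0)}"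
    using ex_nonzero_iff_ex_Ltube_nonzero[OF inv, of "S j j"] by auto
qed simp

section \<open>Scaled unitary transforms\<close>

locale scaled_unitary_transform =
  fixes p :: nat and c :: complex and Wm Lm Lmi :: "nat \<Rightarrow> nat \<Rightarrow> complex"
  assumes c_nonzero: "c \<noteq> 0" and unitary: "cunitary p Wm" and Lm_eq: "Lm = (\<lambda>i j. c * Wm i j)"
    and right_inverse: "is_right_inverse p Lm Lmi" and left_inverse: "is_right_inverse p Lmi Lm"
begin

lemma sum_sq_Ltube: "(\<Sum>k<p. (cmod (Ltube p Lm x k))\<^sup>2) = (cmod c)\<^sup>2 * (\<Sum>t<p. (cmod (x t))\<^sup>2)"
proof -
  have "Ltube p Lm x k = c * mat_vec p Wm x k" for k
    unfolding Ltube_def mat_vec_def Lm_eq by (simp add: sum_distrib_left mult.assoc)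
  then have "(\<Sum>k<p. (cmod (Ltube p Lm x k))\<^sup>2) = (cmod c)\<^sup>2 * sqnorm p (mat_vec p Wm x)"
    unfolding sqnorm_def by (simp add: norm_mult power_mult_distrib sum_distrib_left)
  also have "\<dots> = (cmod c)\<^sup>2 * sqnorm p x"
    by (simp add: sqnorm_mat_vec[OF cunitary_imp_orthonormal_cols[OF unitary]])
  finally show ?thesis by (simp add: sqnorm_def)
qed

lemma tnorm_sq_eq_sum_Tslice: "(cmod c)\<^sup>2 * (tnorm p Is F)\<^sup>2 = (\<Sum>k<p. tsqnorm Is (Tslice p Lm F k))"
proof -
  have "(cmod c)\<^sup>2 * (tnorm p Is F)\<^sup>2 = (\<Sum>xs\<in>tidx Is. (cmod c)\<^sup>2 * (\<Sum>t<p. (cmod (F xs t))\<^sup>2))"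
    unfolding tnorm_def by (simp add: sum_nonneg sum_distrib_left)
  also have "\<dots> = (\<Sum>k<p. tsqnorm Is (Tslice p Lm F k))"
    unfolding tsqnorm_def Tslice_def sum_sq_Ltube[symmetric] by (rule sum.swap)
  finally show ?thesis .
qed

lemma trank_tail_eq_sum_slice_tails:
  assumes tsvd: "is_tsvd p Lm I J X U S V"
  shows "(cmod c)\<^sup>2 * (\<Sum>i\<in>{r..<trank p I J S}. (tube_norm p (S i i))\<^sup>2)
           = (\<Sum>k<p. \<Sum>i\<in>{r..<min I J}. (cmod (Lslice p Lm S k i i))\<^sup>2)"
proof -
  have Z: "{i. i < min I J \<and> (\<exists>t<p. S i i t \<noteq> 0)} = {..<trank p I J S}"
    using nonzero_diag_tubes_eq_lessThan_trank[OF left_inverse tsvd[unfolded is_tsvd_def]] .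
  have "{..<trank p I J S} \<subseteq> {..<min I J}" unfolding Z[symmetric] by auto
  then have "trank p I J S \<le> min I J" by simp
  have "(\<Sum>i\<in>{r..<trank p I J S}. (tube_norm p (S i i))\<^sup>2) = (\<Sum>i\<in>{r..<min I J}. \<Sum>t<p. (cmod (S i i t))\<^sup>2)"
  proof (rule sum.mono_neutral_cong_left)
    show "{r..<trank p I J S} \<subseteq> {r..<min I J}" using \<open>trank p I J S \<le> min I J\<close> by auto
    show "\<forall>i\<in>{r..<min I J} - {r..<trank p I J S}. (\<Sum>t<p. (cmod (S i i t))\<^sup>2) = 0"
    proof
      fix i assume i: "i \<in> {r..<min I J} - {r..<trank p I J S}"
      then have "i \<notin> {i. i < min I J \<and> (\<exists>t<p. S i i t \<noteq> 0)}" unfolding Z by simp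
      with i show "(\<Sum>t<p. (cmod (S i i t))\<^sup>2) = 0" by simp
    qed
  qed (simp_all add: tube_norm_def sum_nonneg)
  then have "(cmod c)\<^sup>2 * (\<Sum>i\<in>{r..<trank p I J S}. (tube_norm p (S i i))\<^sup>2)
      = (\<Sum>i\<in>{r..<min I J}. (cmod c)\<^sup>2 * (\<Sum>t<p. (cmod (S i i t))\<^sup>2))"
    by (simp only: sum_distrib_left[of _ _ "{r..<min I J}"])
  also have "\<dots> = (\<Sum>i\<in>{r..<min I J}. \<Sum>k<p. (cmod (Lslice p Lm S k i i))\<^sup>2)"
    by (simp only: sum_sq_Ltube Lslice_def)
  finally show ?thesis by (simp only: sum.swap[of _ "{r..<min I J}"])
qed

lemma tsqnorm_Tslice_truncated_hosvd_le:
  assumes "length Ips = length Is" and pos: "\<forall>n<length Is. 0 < Is ! n"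
    and le: "\<forall>n<length Is. Ips ! n \<le> Is ! n"
    and tsvd: "\<forall>n<length Is. is_tsvd p Lm (Is ! n) (ncols Is n) (unfold Is n A) (U n) (S n) (V n)"
    and "k < p"
  defines "Ub \<equiv> \<lambda>n. tcols (Ips ! n) (U n)"
  shows "tsqnorm Is (\<lambda>xs. Tslice p Lm A k xs
           - Tslice p Lm (mmprod p Lm Lmi Ips (mmprod p Lm Lmi Is A (\<lambda>n. tmH p Lm Lmi (Ub n))) Ub) k xs)
      \<le> (\<Sum>n<length Is. \<Sum>i\<in>{Ips ! n..<min (Is ! n) (ncols Is n)}. (cmod (Lslice p Lm (S n) k i i))\<^sup>2)"
proof -
  define Uk where "Uk n i j = (if j < Ips ! n then Lslice p Lm (U n) k i j else 0)" for n i j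
  have "Lslice p Lm (Ub n) k = Uk n" for n
    unfolding Ub_def Lslice_tcols Uk_def ..
  then have Ah: "Tslice p Lm (mmprod p Lm Lmi Ips (mmprod p Lm Lmi Is A (\<lambda>n. tmH p Lm Lmi (Ub n))) Ub) k
      = cmmprod Ips (cmmprod Is (Tslice p Lm A k) (\<lambda>n i j. cnj (Uk n j i))) Uk"
    by (simp add: Tslice_mmprod Lslice_tmH right_inverse \<open>k < p\<close>)
  have "\<forall>n<length Is. is_svd (Is ! n) (ncols Is n) (\<lambda>i j. Tslice p Lm A k (unfold_index Is n i j))
      (Lslice p Lm (U n) k) (Lslice p Lm (S n) k) (Lslice p Lm (V n) k)"
    using tsvd by (simp add: is_svd_Tslice_unfold \<open>k < p\<close>)
  from tsqnorm_truncated_hosvd_le[OF \<open>length Ips = length Is\<close> pos le this]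
  show ?thesis unfolding Ah Uk_def .
qed

lemma tnorm_truncated_hosvd_error_sq_le:
  assumes "length Ips = length Is" and pos: "\<forall>n<length Is. 0 < Is ! n"
    and le: "\<forall>n<length Is. Ips ! n \<le> Is ! n"
    and tsvd: "\<forall>n<length Is. is_tsvd p Lm (Is ! n) (ncols Is n) (unfold Is n A) (U n) (S n) (V n)"
  defines "Ub \<equiv> \<lambda>n. tcols (Ips ! n) (U n)"
  shows "(tnorm p Is (\<lambda>xs t. A xs t
            - mmprod p Lm Lmi Ips (mmprod p Lm Lmi Is A (\<lambda>n. tmH p Lm Lmi (Ub n))) Ub xs t))\<^sup>2
         \<le> (\<Sum>n<length Is. \<Sum>i\<in>{Ips ! n..<trank p (Is ! n) (ncols Is n) (S n)}. (tube_norm p (S n i i))\<^sup>2)"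
    (is "(tnorm p Is (\<lambda>xs t. A xs t - ?Ah xs t))\<^sup>2 \<le> ?bound")
proof -
  have "(cmod c)\<^sup>2 * (tnorm p Is (\<lambda>xs t. A xs t - ?Ah xs t))\<^sup>2
      = (\<Sum>k<p. tsqnorm Is (\<lambda>xs. Tslice p Lm A k xs - Tslice p Lm ?Ah k xs))"
    by (simp add: tnorm_sq_eq_sum_Tslice Tslice_diff)
  also have "\<dots> \<le> (\<Sum>k<p. \<Sum>n<length Is. \<Sum>i\<in>{Ips ! n..<min (Is ! n) (ncols Is n)}. (cmod (Lslice p Lm (S n) k i i))\<^sup>2)"
    using tsqnorm_Tslice_truncated_hosvd_le[OF assms(1-4)] by (intro sum_mono) (simp add: Ub_def)
  also have "\<dots> = (\<Sum>n<length Is. (cmod c)\<^sup>2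
                     * (\<Sum>i\<in>{Ips ! n..<trank p (Is ! n) (ncols Is n) (S n)}. (tube_norm p (S n i i))\<^sup>2))"
  proof (subst sum.swap, rule sum.cong[OF refl])
    fix n assume "n \<in> {..<length Is}"
    with tsvd have "is_tsvd p Lm (Is ! n) (ncols Is n) (unfold Is n A) (U n) (S n) (V n)" by simp
    from trank_tail_eq_sum_slice_tails[OF this]
    show "(\<Sum>k<p. \<Sum>i\<in>{Ips ! n..<min (Is ! n) (ncols Is n)}. (cmod (Lslice p Lm (S n) k i i))\<^sup>2)
        = (cmod c)\<^sup>2 * (\<Sum>i\<in>{Ips ! n..<trank p (Is ! n) (ncols Is n) (S n)}. (tube_norm p (S n i i))\<^sup>2)"
      by simp
  qed
  also have "\<dots> = (cmod c)\<^sup>2 * ?bound" by (simp add: sum_distrib_left)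
  finally show ?thesis using c_nonzero by simp
qed

lemma trank_tail_sq_le_tnorm_approx_error:
  assumes "length Ips = length Is" and pos: "\<forall>n<length Is. 0 < Is ! n"
    and n: "n < length Is" and "Ips ! n \<le> Is ! n"
    and tsvd: "is_tsvd p Lm (Is ! n) (ncols Is n) (unfold Is n A) U S V"
    and W: "tmeq p (Ips ! n) (Ips ! n) (tmprod p Lm Lmi (Is ! n) (tmH p Lm Lmi (Ws n)) (Ws n)) (tmId p Lmi)"
  shows "(\<Sum>i\<in>{Ips ! n..<trank p (Is ! n) (ncols Is n) S}. (tube_norm p (S i i))\<^sup>2)
           \<le> (tnorm p Is (\<lambda>xs t. A xs t - mmprod p Lm Lmi Ips Sc Ws xs t))\<^sup>2"
    (is "?tail \<le> (tnorm p Is (\<lambda>xs t. A xs t - ?B xs t))\<^sup>2")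
proof -
  have "(cmod c)\<^sup>2 * ?tail = (\<Sum>k<p. \<Sum>i\<in>{Ips ! n..<min (Is ! n) (ncols Is n)}. (cmod (Lslice p Lm S k i i))\<^sup>2)"
    by (rule trank_tail_eq_sum_slice_tails[OF tsvd])
  also have "\<dots> \<le> (\<Sum>k<p. tsqnorm Is (\<lambda>xs. Tslice p Lm A k xs - Tslice p Lm ?B k xs))"
  proof (rule sum_mono)
    fix k assume "k \<in> {..<p}"
    then have "k < p" by simp
    have "orthonormal_cols (Is ! n) (Ips ! n) (Lslice p Lm (Ws n) k)"
      by (rule orthonormal_cols_Lslice[OF right_inverse \<open>k < p\<close> W])
    from svd_tail_le_cmmprod_error[OF \<open>length Ips = length Is\<close> pos n \<open>Ips ! n \<le> Is ! n\<close>
        is_svd_Tslice_unfold[OF tsvd \<open>k < p\<close>], of "\<lambda>n. Lslice p Lm (Ws n) k", OF this]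
    show "(\<Sum>i\<in>{Ips ! n..<min (Is ! n) (ncols Is n)}. (cmod (Lslice p Lm S k i i))\<^sup>2)
        \<le> tsqnorm Is (\<lambda>xs. Tslice p Lm A k xs - Tslice p Lm ?B k xs)"
      by (simp add: Tslice_mmprod[OF right_inverse \<open>k < p\<close>])
  qed
  also have "\<dots> = (cmod c)\<^sup>2 * (tnorm p Is (\<lambda>xs t. A xs t - ?B xs t))\<^sup>2"
    by (simp add: tnorm_sq_eq_sum_Tslice Tslice_diff)
  finally show ?thesis using c_nonzero by simp
qed

end

theorem theorem5p4:
  fixes p :: nat and c :: complex and Wm Lm Lmi :: "nat \<Rightarrow> nat \<Rightarrow> complex"
    and Is Ips :: "nat list" and A :: tten and U S V :: "nat \<Rightarrow> tmat"
  assumes p: "p \<ge> 1"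
    and c: "c \<noteq> 0"
    and Wm: "cunitary p Wm"
    and Lm: "Lm = (\<lambda>i j. c * Wm i j)"
    and Lmi1: "\<forall>i<p. \<forall>j<p. (\<Sum>l<p. Lmi i l * Lm l j) = (if i = j then 1 else 0)"
    and Lmi2: "\<forall>i<p. \<forall>j<p. (\<Sum>l<p. Lm i l * Lmi l j) = (if i = j then 1 else 0)"
    and Ips: "length Ips = length Is"
    and Ips_bd: "\<forall>n<length Is. 1 \<le> Ips ! n \<and> Ips ! n \<le> Is ! n"
    and tsvd: "\<forall>n<length Is.
        is_tsvd p Lm (Is ! n) (ncols Is n) (unfold Is n A) (U n) (S n) (V n)"
  shows "\<forall>(Sc :: tten) (Ws :: nat \<Rightarrow> tmat).
      (\<forall>n<length Is. tmeq p (Ips ! n) (Ips ! n)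
          (tmprod p Lm Lmi (Is ! n) (tmH p Lm Lmi (Ws n)) (Ws n)) (tmId p Lmi)) \<longrightarrow>
      (let Ub = (\<lambda>n. tcols (Ips ! n) (U n));
           St = mmprod p Lm Lmi Is A (\<lambda>n. tmH p Lm Lmi (Ub n));
           Ah = mmprod p Lm Lmi Ips St Ub;
           bnd = sqrt (\<Sum>n<length Is.
                    \<Sum>i\<in>{Ips ! n..<trank p (Is ! n) (ncols Is n) (S n)}.
                      (tube_norm p (S n i i))\<^sup>2)
       in tnorm p Is (\<lambda>xs k. A xs k - Ah xs k) \<le> bnd \<and>
          bnd \<le> sqrt (real (length Is)) *
            tnorm p Is (\<lambda>xs k. A xs k - mmprod p Lm Lmi Ips Sc Ws xs k))"
proof (intro allI impI)
  fix Sc :: tten and Ws :: "nat \<Rightarrow> tmat"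
  assume W: "\<forall>n<length Is. tmeq p (Ips ! n) (Ips ! n)
          (tmprod p Lm Lmi (Is ! n) (tmH p Lm Lmi (Ws n)) (Ws n)) (tmId p Lmi)"
  interpret scaled_unitary_transform p c Wm Lm Lmi
    using c Wm Lm Lmi1 Lmi2 by unfold_locales (simp_all add: is_right_inverse_def)
  have pos: "\<forall>n<length Is. 0 < Is ! n" and le: "\<forall>n<length Is. Ips ! n \<le> Is ! n"
    using Ips_bd by fastforce+
  let ?tail = "\<lambda>n. \<Sum>i\<in>{Ips ! n..<trank p (Is ! n) (ncols Is n) (S n)}. (tube_norm p (S n i i))\<^sup>2"
  let ?err = "tnorm p Is (\<lambda>xs k. A xs k - mmprod p Lm Lmi Ips Sc Ws xs k)"
  have "?tail n \<le> ?err\<^sup>2" if "n < length Is" for n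
    using trank_tail_sq_le_tnorm_approx_error[OF Ips pos that] le tsvd W that by blast
  then have "(\<Sum>n<length Is. ?tail n) \<le> (\<Sum>n<length Is. ?err\<^sup>2)" by (intro sum_mono) simp
  then have "sqrt (\<Sum>n<length Is. ?tail n) \<le> sqrt (real (length Is) * ?err\<^sup>2)"
    by (intro real_sqrt_le_mono) simp
  also have "\<dots> = sqrt (real (length Is)) * ?err" by (simp add: real_sqrt_mult tnorm_nonneg)
  finally have "sqrt (\<Sum>n<length Is. ?tail n) \<le> sqrt (real (length Is)) * ?err" .
  moreover have "tnorm p Is (\<lambda>xs k. A xs k - mmprod p Lm Lmi Ips
          (mmprod p Lm Lmi Is A (\<lambda>n. tmH p Lm Lmi (tcols (Ips ! n) (U n)))) (\<lambda>n. tcols (Ips ! n) (U n)) xs k)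
        \<le> sqrt (\<Sum>n<length Is. ?tail n)"
    using tnorm_truncated_hosvd_error_sq_le[OF Ips pos le tsvd] by (intro real_le_rsqrt)
  ultimately show "let Ub = (\<lambda>n. tcols (Ips ! n) (U n));
           St = mmprod p Lm Lmi Is A (\<lambda>n. tmH p Lm Lmi (Ub n));
           Ah = mmprod p Lm Lmi Ips St Ub;
           bnd = sqrt (\<Sum>n<length Is. ?tail n)
       in tnorm p Is (\<lambda>xs k. A xs k - Ah xs k) \<le> bnd \<and> bnd \<le> sqrt (real (length Is)) * ?err"
    unfolding Let_def by blast
qed

end
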